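(* Let $p\geq 1$, let $\boldsymbol \Omega$ be a $p\times p$ positive definite matrix and $0 < c < 1/2$. Let $\boldsymbol \beta = \boldsymbol s \circ \boldsymbol z$ where $\boldsymbol z \sim \text{normal}(\boldsymbol 0,\boldsymbol \Omega)$ is independent of $\boldsymbol s$, and $s_1^2,\dots,s_p^2$ are i.i.d. $\text{gamma}(\text{shape } c, \text{rate } c)$ with $s_j>0$ (the SNG prior). Then for every $j\in\{1,\dots,p\}$ the marginal prior density of $\beta_j$ at $0$, $$p(\beta_j = 0 \mid c, \boldsymbol \Omega) = \int_{\mathbb{R}^{p-1}} \int_{(0,\infty)^p} \Big(\prod_{i=1}^p \frac{g_c(s_i)}{s_i}\Big)\phi_{\boldsymbol \Omega}(\boldsymbol b/\boldsymbol s)\, d\boldsymbol s\, d\boldsymbol b_{-j}\Big|_{b_j=0},$$ equals $+\infty$.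
   Context: $\phi_{\boldsymbol \Omega}$ denotes the $\text{normal}(\boldsymbol 0,\boldsymbol \Omega)$ density, $g_c(s)\propto s^{2c-1}e^{-cs^2}$ on $(0,\infty)$ is the density of $s_j$, $\boldsymbol b/\boldsymbol s$ is elementwise division, $\circ$ is the elementwise product, and $\boldsymbol b_{-j}$ denotes $\boldsymbol b$ with its $j$-th coordinate removed (the outer integral is over $\boldsymbol b_{-j}$ with $b_j=0$). *)

theory Defs
  imports "HOL-Analysis.Analysis"
begin

definition pos_def_mat :: "real^'n^'n \<Rightarrow> bool" where
  "pos_def_mat A \<longleftrightarrow> transpose A = A \<and> (\<forall>x. x \<noteq> 0 \<longrightarrow> x \<bullet> (A *v x) > 0)"

definition normal_density :: "real^'n^'n \<Rightarrow> real^'n \<Rightarrow> real" where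
  "normal_density Om x =
     exp (- (x \<bullet> (matrix_inv Om *v x)) / 2) / sqrt ((2 * pi) ^ CARD('n) * det Om)"

text \<open>Density g_c of s when s^2 ~ gamma(shape c, rate c), s > 0:
  g_c(s) = 2 c^c / Gamma(c) * s^(2c-1) * exp(-c s^2).\<close>
definition g_dens :: "real \<Rightarrow> real \<Rightarrow> real" where
  "g_dens c s = (if s > 0 then 2 * c powr c / Gamma c * s powr (2 * c - 1) * exp (- c * s\<^sup>2) else 0)"

definition sng_marginal_at_zero :: "real \<Rightarrow> real^'n^'n \<Rightarrow> 'n \<Rightarrow> ennreal" where
  "sng_marginal_at_zero c Om j =
     (\<integral>\<^sup>+ b. (\<integral>\<^sup>+ s. ennreal ((\<Prod>i\<in>UNIV. g_dens c (s i) / s i) *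
              normal_density Om (\<chi> i. (if i = j then 0 else b i) / s i))
          \<partial>(PiM UNIV (\<lambda>_. restrict_space lborel {0<..})))
      \<partial>(PiM (UNIV - {j}) (\<lambda>_. lborel)))"

end

(*
  With b_j = 0 the variable s_j enters the integrand only through the factor
  g_c(s_j)/s_j, which behaves like s_j^(2c-2) near 0 and so is not integrable
  there when c <= 1/2.  For every b the integrand dominates a product
  delta * prod_i h_i(s_i), where h_j has this pole and the other h_i are bumps
  on [1,2], on which s_i >= 1 keeps phi_Omega(b/s) bounded away from 0.  By
  Tonelli the inner integral is therefore infinite for every b, and so is the
  outer one.
*)
theory Submission
  imports Defs
begin

lemma det_nonzero_if_quadratic_form_pos:
  fixes A :: "real^'n^'n"
  assumes "\<And>x. x \<noteq> 0 \<Longrightarrow> x \<bullet> (A *v x) > 0"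
  shows "det A \<noteq> 0"
proof -
  have "A *v x = 0 \<Longrightarrow> x = 0" for x
    using assms[of x] by fastforce
  then show ?thesis
    by (meson invertible_det_nz invertible_left_inverse matrix_left_invertible_ker)
qed

lemma det_pos_if_quadratic_form_pos:
  fixes A :: "real^'n^'n"
  assumes "\<And>x. x \<noteq> 0 \<Longrightarrow> x \<bullet> (A *v x) > 0"
  shows "det A > 0"
proof (rule ccontr)
  assume "\<not> det A > 0"
  \<comment> \<open>The determinant cannot vanish on the segment from the identity to A,
    along which the quadratic form stays positive definite.\<close>
  define M where "M t = (1 - t) *\<^sub>R mat 1 + t *\<^sub>R A" for t :: real
  have "continuous_on {0..1} (\<lambda>t. det (M t))"
    unfolding det_def M_def by (intro continuous_intros)
  then obtain t where "t \<in> {0..1}" "det (M t) = 0"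
    using IVT2'[of "\<lambda>t. det (M t)" 1 0 0] \<open>\<not> det A > 0\<close> by (force simp: M_def)
  have "x \<bullet> (M t *v x) > 0" if "x \<noteq> 0" for x
  proof -
    have "x \<bullet> (M t *v x) = (1 - t) * (x \<bullet> x) + t * (x \<bullet> (A *v x))"
      by (simp add: M_def algebra_simps flip: scaleR_matrix_vector_assoc)
    moreover have "x \<bullet> x > 0" "x \<bullet> (A *v x) > 0"
      using that assms by auto
    ultimately show ?thesis
      using \<open>t \<in> {0..1}\<close> by (smt (verit) atLeastAtMost_iff mult_nonneg_nonneg mult_pos_pos)
  qed
  then show False
    using det_nonzero_if_quadratic_form_pos \<open>det (M t) = 0\<close> by blast
qed

lemma normal_density_nonneg: "0 \<le> det Om \<Longrightarrow> 0 \<le> normal_density Om x"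
  by (simp add: normal_density_def)

lemma normal_density_bounded_below:
  fixes Om :: "real^'n^'n"
  assumes "det Om > 0"
  obtains \<delta> where "\<delta> > 0" "\<And>x. norm x \<le> R \<Longrightarrow> \<delta> \<le> normal_density Om x"
proof -
  obtain B where B: "B > 0" "\<And>x. norm (matrix_inv Om *v x) \<le> norm x * B"
    using bounded_linear.pos_bounded[OF matrix_vector_mul_bounded_linear] by blast
  define D where "D = sqrt ((2 * pi) ^ CARD('n) * det Om)"
  have "D > 0" unfolding D_def using assms by simp
  have "exp (- (R\<^sup>2 * B) / 2) / D \<le> normal_density Om x" if "norm x \<le> R" for x
  proof -
    have "x \<bullet> (matrix_inv Om *v x) \<le> norm x * norm (matrix_inv Om *v x)"
      by (rule norm_cauchy_schwarz)
    also have "\<dots> \<le> (norm x)\<^sup>2 * B"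
      using B(2)[of x] by (simp add: mult_left_mono power2_eq_square mult.assoc)
    also have "\<dots> \<le> R\<^sup>2 * B"
      using that B(1) by (intro mult_right_mono power_mono) auto
    finally have "exp (- (R\<^sup>2 * B) / 2) \<le> exp (- (x \<bullet> (matrix_inv Om *v x)) / 2)"
      by simp
    then show ?thesis
      unfolding normal_density_def D_def[symmetric] using \<open>D > 0\<close> by (simp add: divide_right_mono)
  qed
  then show ?thesis using that[of "exp (- (R\<^sup>2 * B) / 2) / D"] \<open>D > 0\<close> by simp
qed

lemma g_dens_nonneg: "0 < c \<Longrightarrow> 0 \<le> g_dens c t"
  by (simp add: g_dens_def Gamma_real_pos)

lemma g_dens_bounded_below:
  assumes "0 < c" "c \<le> 1/2" "0 < t" "t \<le> b"
  shows "2 * c powr c / Gamma c * b powr (2 * c - 1) * exp (- c * b\<^sup>2) \<le> g_dens c t"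
proof -
  define K where "K = 2 * c powr c / Gamma c"
  have "K > 0" using assms by (simp add: K_def Gamma_real_pos)
  have "b powr (2 * c - 1) \<le> t powr (2 * c - 1)"
    using assms by (intro powr_mono2') auto
  moreover have "exp (- c * b\<^sup>2) \<le> exp (- c * t\<^sup>2)"
    using assms power_mono[of t b 2] by simp
  ultimately have "K * b powr (2 * c - 1) * exp (- c * b\<^sup>2)
      \<le> K * t powr (2 * c - 1) * exp (- c * t\<^sup>2)"
    using \<open>K > 0\<close> by (simp add: mult_left_mono mult_mono)
  then show ?thesis using assms by (simp add: g_dens_def K_def)
qed

lemma nn_integral_inverse_Ioc_0_1_eq_top:
  "(\<integral>\<^sup>+ t. ennreal (1 / t) * indicator {0<..1} t \<partial>lborel) = \<infinity>"
proof -
  have "of_nat n \<le> (\<integral>\<^sup>+ t. ennreal (1 / t) * indicator {0<..1} t \<partial>lborel)" for n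
  proof -
    define e where "e = exp (- real n)"
    have e: "0 < e" "e \<le> 1" by (auto simp: e_def)
    have "(\<integral>\<^sup>+ t. ennreal (1 / t) * indicator {e..1} t \<partial>lborel) = ennreal (ln 1 - ln e)"
      by (rule nn_integral_FTC_Icc) (use e in \<open>auto intro!: derivative_eq_intros\<close>)
    also have "ln 1 - ln e = real n" by (simp add: e_def)
    finally have "(\<integral>\<^sup>+ t. ennreal (1 / t) * indicator {e..1} t \<partial>lborel) = of_nat n"
      by (simp add: ennreal_of_nat_eq_real_of_nat)
    moreover have "(\<integral>\<^sup>+ t. ennreal (1 / t) * indicator {e..1} t \<partial>lborel)
        \<le> (\<integral>\<^sup>+ t. ennreal (1 / t) * indicator {0<..1} t \<partial>lborel)"
      using e by (intro nn_integral_mono) (auto simp: indicator_def)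
    ultimately show ?thesis by simp
  qed
  then have "(SUP n. of_nat n :: ennreal) \<le> (\<integral>\<^sup>+ t. ennreal (1 / t) * indicator {0<..1} t \<partial>lborel)"
    by (rule SUP_least)
  then show ?thesis by (simp add: ennreal_SUP_of_nat_eq_top top_unique)
qed

lemma nn_integral_PiM_eq_top_if_ge_prod:
  fixes h :: "'i \<Rightarrow> 'a \<Rightarrow> ennreal"
  assumes "product_sigma_finite M" "finite I" "j \<in> I"
    and "\<And>i. i \<in> I \<Longrightarrow> h i \<in> borel_measurable (M i)"
    and "integral\<^sup>N (M j) (h j) = \<infinity>" and "\<And>i. i \<in> I \<Longrightarrow> integral\<^sup>N (M i) (h i) \<noteq> 0"
    and "\<delta> \<noteq> 0" and "\<And>s. s \<in> space (PiM I M) \<Longrightarrow> \<delta> * (\<Prod>i\<in>I. h i (s i)) \<le> F s"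
  shows "integral\<^sup>N (PiM I M) F = \<infinity>"
proof -
  interpret product_sigma_finite M by fact
  have "(\<Prod>i\<in>I. integral\<^sup>N (M i) (h i)) = \<infinity>"
    using assms by (auto simp: ennreal_prod_eq_top)
  then have "\<infinity> = \<delta> * (\<Prod>i\<in>I. integral\<^sup>N (M i) (h i))"
    using \<open>\<delta> \<noteq> 0\<close> by (simp add: ennreal_mult_top)
  also have "\<dots> = \<delta> * (\<integral>\<^sup>+ s. (\<Prod>i\<in>I. h i (s i)) \<partial>PiM I M)"
    using assms by (subst product_nn_integral_prod) auto
  also have "\<dots> = (\<integral>\<^sup>+ s. \<delta> * (\<Prod>i\<in>I. h i (s i)) \<partial>PiM I M)"
    using assms by (intro nn_integral_cmult[symmetric] borel_measurable_prod_ennreal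
        measurable_compose[OF measurable_component_singleton]) auto
  also have "\<dots> \<le> integral\<^sup>N (PiM I M) F"
    using assms by (intro nn_integral_mono) auto
  finally show ?thesis by (simp add: top_unique)
qed

lemma nn_integral_PiM_lborel_top:
  assumes "finite I"
  shows "(\<integral>\<^sup>+ b. \<infinity> \<partial>PiM I (\<lambda>_. lborel :: real measure)) = \<infinity>"
proof -
  interpret product_sigma_finite "\<lambda>_. lborel :: real measure"
    by (simp add: product_sigma_finite_def sigma_finite_lborel)
  have "emeasure (PiM I (\<lambda>_. lborel :: real measure)) (space (PiM I (\<lambda>_. lborel))) \<noteq> 0"
    using assms by (simp add: space_PiM emeasure_PiM)
  then show ?thesis by (simp add: ennreal_top_mult)
qed

text \<open>With \<open>A \<le> g\<^sub>c\<close> on \<open>(0,2]\<close>, the factor \<open>A/t\<close> in coordinate \<open>j\<close> stays below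
  \<open>g\<^sub>c(t)/t\<close> yet keeps its non-integrable pole at 0.\<close>

definition sng_minorant :: "real \<Rightarrow> 'i \<Rightarrow> 'i \<Rightarrow> real \<Rightarrow> real" where
  "sng_minorant A j i t =
     (if i = j then if t \<in> {0<..1} then A / t else 0 else if t \<in> {1..2} then A / 2 else 0)"

lemma sng_minorant_nonneg: "0 < A \<Longrightarrow> 0 \<le> sng_minorant A j i t"
  by (simp add: sng_minorant_def)

lemma sng_minorant_le_g_dens_div:
  assumes "0 < c" "0 < A" "\<And>t. 0 < t \<Longrightarrow> t \<le> 2 \<Longrightarrow> A \<le> g_dens c t" "0 < t"
  shows "sng_minorant A j i t \<le> g_dens c t / t"
proof -
  have "0 \<le> g_dens c t / t" using assms by (simp add: g_dens_nonneg)
  moreover have "A / t \<le> g_dens c t / t" if "t \<le> 1"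
    using assms that by (simp add: divide_right_mono)
  moreover have "A / 2 \<le> g_dens c t / t" if "1 \<le> t" "t \<le> 2"
    using assms that by (intro frac_le) (auto simp: g_dens_nonneg)
  ultimately show ?thesis by (simp add: sng_minorant_def)
qed

lemma nn_integral_sng_minorant_pole:
  assumes "0 < A"
  shows "(\<integral>\<^sup>+ t. ennreal (sng_minorant A j j t) \<partial>restrict_space lborel {0<..}) = \<infinity>"
proof -
  have "(\<integral>\<^sup>+ t. ennreal (sng_minorant A j j t) \<partial>restrict_space lborel {0<..})
      = (\<integral>\<^sup>+ t. ennreal A * (ennreal (1 / t) * indicator {0<..1} t) \<partial>lborel)"
    using assms by (subst nn_integral_restrict_space, simp, intro nn_integral_cong)
      (auto simp: sng_minorant_def indicator_def simp flip: ennreal_mult)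
  also have "\<dots> = \<infinity>"
    using assms by (simp add: nn_integral_cmult nn_integral_inverse_Ioc_0_1_eq_top ennreal_mult_top)
  finally show ?thesis .
qed

lemma nn_integral_sng_minorant_nonzero:
  assumes "0 < A"
  shows "(\<integral>\<^sup>+ t. ennreal (sng_minorant A j i t) \<partial>restrict_space lborel {0<..}) \<noteq> 0"
proof (cases "i = j")
  case True
  then show ?thesis using nn_integral_sng_minorant_pole[OF assms, of j] by simp
next
  case False
  then have "(\<integral>\<^sup>+ t. ennreal (sng_minorant A j i t) \<partial>restrict_space lborel {0<..})
      = (\<integral>\<^sup>+ t. ennreal (A / 2) * indicator {1..2::real} t \<partial>lborel)"
    by (subst nn_integral_restrict_space, simp, intro nn_integral_cong)
      (auto simp: sng_minorant_def indicator_def)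
  then show ?thesis using assms by (simp add: nn_integral_cmult_indicator)
qed

lemma sng_integrand_ge_minorant:
  fixes Om :: "real^'n^'n"
  assumes "det Om > 0" "0 < c" "0 < A" "\<And>t. 0 < t \<Longrightarrow> t \<le> 2 \<Longrightarrow> A \<le> g_dens c t"
    and "0 < \<delta>" "\<And>x. norm x \<le> norm (\<chi> i. if i = j then 0 else b i) \<Longrightarrow> \<delta> \<le> normal_density Om x"
    and s: "\<And>i. 0 < s i"
  shows "\<delta> * (\<Prod>i\<in>UNIV. sng_minorant A j i (s i))
    \<le> (\<Prod>i\<in>UNIV. g_dens c (s i) / s i) * normal_density Om (\<chi> i. (if i = j then 0 else b i) / s i)"
proof (cases "\<forall>i. i \<noteq> j \<longrightarrow> 1 \<le> s i")
  case True
  have "\<bar>(if i = j then 0 else b i) / s i\<bar> \<le> \<bar>if i = j then 0 else b i\<bar>" for i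
    using True s[of i] by (auto simp: abs_div divide_le_eq mult_le_cancel_left1)
  then have "norm (\<chi> i. (if i = j then 0 else b i) / s i) \<le> norm (\<chi> i. if i = j then 0 else b i)"
    by (intro norm_le_componentwise_cart) simp
  then have "\<delta> \<le> normal_density Om (\<chi> i. (if i = j then 0 else b i) / s i)"
    by (rule assms(6))
  moreover have "(\<Prod>i\<in>UNIV. sng_minorant A j i (s i)) \<le> (\<Prod>i\<in>UNIV. g_dens c (s i) / s i)"
    using assms by (intro prod_mono conjI sng_minorant_nonneg sng_minorant_le_g_dens_div)
  moreover have "0 \<le> (\<Prod>i\<in>UNIV. sng_minorant A j i (s i))"
    using assms by (intro prod_nonneg sng_minorant_nonneg)
  ultimately show ?thesis
    using \<open>\<delta> > 0\<close> by (subst mult.commute) (intro mult_mono; simp)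
next
  case False
  then obtain i where "i \<noteq> j" "s i < 1" by auto
  then have "(\<Prod>i\<in>UNIV. sng_minorant A j i (s i)) = 0"
    by (intro prod_zero bexI[of _ i]) (auto simp: sng_minorant_def)
  moreover have "0 \<le> (\<Prod>i\<in>UNIV. g_dens c (s i) / s i)"
    using s assms by (intro prod_nonneg divide_nonneg_pos g_dens_nonneg)
  ultimately show ?thesis
    using assms(1) by (simp only: mult_zero_right) (intro mult_nonneg_nonneg normal_density_nonneg; simp)
qed

lemma sng_inner_integral_eq_top:
  fixes Om :: "real^'n^'n" and b :: "'n \<Rightarrow> real" and j :: 'n
  assumes "det Om > 0" "0 < c" "c \<le> 1/2"
  shows "(\<integral>\<^sup>+ s. ennreal ((\<Prod>i\<in>UNIV. g_dens c (s i) / s i) *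
              normal_density Om (\<chi> i. (if i = j then 0 else b i) / s i))
          \<partial>PiM UNIV (\<lambda>_. restrict_space lborel {0<..})) = \<infinity>"
proof -
  define A where "A = 2 * c powr c / Gamma c * 2 powr (2 * c - 1) * exp (- c * 2\<^sup>2)"
  have "A > 0" using assms by (simp add: A_def)
  have A_le: "A \<le> g_dens c t" if "0 < t" "t \<le> 2" for t
    unfolding A_def using assms(2,3) that by (rule g_dens_bounded_below)
  obtain \<delta> where "\<delta> > 0"
    and \<delta>: "\<And>x. norm x \<le> norm (\<chi> i. if i = j then 0 else b i) \<Longrightarrow> \<delta> \<le> normal_density Om x"
    using normal_density_bounded_below[OF assms(1)] by blast
  show ?thesis
  proof (rule nn_integral_PiM_eq_top_if_ge_prod
      [where h="\<lambda>i t. ennreal (sng_minorant A j i t)" and \<delta>="ennreal \<delta>" and j=j])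
    show "product_sigma_finite (\<lambda>_::'n. restrict_space lborel ({0<..} :: real set))"
      by (simp add: product_sigma_finite_def sigma_finite_measure_restrict_space sigma_finite_lborel)
    show "(\<lambda>t. ennreal (sng_minorant A j i t)) \<in> borel_measurable (restrict_space lborel {0<..})" for i
      by (rule measurable_restrict_space1) (unfold sng_minorant_def, measurable)
    fix s :: "'n \<Rightarrow> real"
    assume "s \<in> space (PiM UNIV (\<lambda>_. restrict_space lborel {0<..}))"
    then have "0 < s i" for i by (auto simp: space_PiM space_restrict_space)
    then show "ennreal \<delta> * (\<Prod>i\<in>UNIV. ennreal (sng_minorant A j i (s i)))
        \<le> ennreal ((\<Prod>i\<in>UNIV. g_dens c (s i) / s i) *
              normal_density Om (\<chi> i. (if i = j then 0 else b i) / s i))"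
      using sng_integrand_ge_minorant[OF assms(1,2) \<open>A > 0\<close> A_le \<open>\<delta> > 0\<close> \<delta>] \<open>\<delta> > 0\<close> \<open>A > 0\<close>
      by (simp add: prod_ennreal sng_minorant_nonneg ennreal_mult'[symmetric] ennreal_leI)
  qed (use \<open>A > 0\<close> \<open>\<delta> > 0\<close>
      in \<open>auto simp: nn_integral_sng_minorant_pole nn_integral_sng_minorant_nonzero\<close>)
qed

theorem proposition2p4:
  fixes Om :: "real^'n^'n" and c :: real and j :: 'n
  assumes "pos_def_mat Om" and "0 < c" and "c < 1/2"
  shows "sng_marginal_at_zero c Om j = \<infinity>"
proof -
  have "det Om > 0"
    using assms(1) by (intro det_pos_if_quadratic_form_pos) (auto simp: pos_def_mat_def)
  then have "sng_marginal_at_zero c Om j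
      = (\<integral>\<^sup>+ b. \<infinity> \<partial>PiM (UNIV - {j}) (\<lambda>_. lborel :: real measure))"
    unfolding sng_marginal_at_zero_def using assms(2) less_imp_le[OF assms(3)]
    by (intro nn_integral_cong) (simp add: sng_inner_integral_eq_top)
  also have "\<dots> = \<infinity>"
    by (rule nn_integral_PiM_lborel_top) simp
  finally show ?thesis .
qed

end
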